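(* Let $U$ be a set with a total order $\preceq$, let $k>1$, and let $\mathcal P$ be a $k$-pattern in $U$ that admits at most one reconstruction from $\preceq$-consecutive points. Let $n$ be a positive integer, $r$ the remainder when $n$ is divided by $k-1$, $V$ an $n$-element subset of $U$, and $(V_1\prec\cdots\prec V_{k-1})$ a $\preceq$-orderly, balanced $(k-1)$-decomposition of $V$. Then $S_{\mathcal P}(V)=(n-r)(n+r-k+1)/(2k-2)$ if and only if for every $j\in\{1,\dots,k-1\}$ and every pair of points $v\prec w$ in $V_j$, there exists a reconstruction $P$ of $\mathcal P$ with $v$ and $w$ as its $j$th and $(j+1)$th points, and this $P$ is a subset of $V$ that is not of echelon $i$ in the decomposition for any $i\neq j$.
   Context: A pattern in $U$ is a collection $\mathcal P$ of finite subsets of $U$; it is a $k$-pattern if every instance has exactly $k$ elements. $S_{\mathcal P}(V)=|\{P\subseteq V:P\in\mathcal P\}|$. The $i$th point of a finite set w.r.t. $\preceq$ is the element with exactly $i-1$ elements of the set below it. For $j\in\{1,\dots,k-1\}$ and $u\prec v$, a reconstruction of $\mathcal P$ with $u,v$ as $j$th and $(j+1)$th points is an instance $P\in\mathcal P$ whose $j$th and $(j+1)$th points are $u,v$; $\mathcal P$ admits at most one reconstruction from $\preceq$-consecutive points if there is at most one such reconstruction for all such $j,u,v$. For $A,B\subseteq U$, $A\prec B$ means $a\prec b$ for all $a\in A,b\in B$. An $\ell$-decomposition of $V$ is a family $(V_1,\dots,V_\ell)$ of pairwise disjoint, possibly empty subsets with union $V$; it is $\preceq$-orderly if any two distinct members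 are $\prec$-comparable as sets (indexed so $V_1\prec\cdots\prec V_\ell$), and balanced if each $V_i$ has $\lfloor n/\ell\rfloor$ or $\lceil n/\ell\rceil$ elements. A $k$-subset $P=\{p_1\prec\cdots\prec p_k\}$ is of echelon $j$ in $(V_1\prec\cdots\prec V_{k-1})$ if $p_j,p_{j+1}\in V_j$. *)

theory Defs
  imports Complex_Main
begin

definition k_pattern :: "nat \<Rightarrow> 'a set set \<Rightarrow> bool" where
  "k_pattern k \<P> \<longleftrightarrow> (\<forall>P\<in>\<P>. finite P \<and> card P = k)"

definition count_instances :: "'a set set \<Rightarrow> 'a set \<Rightarrow> nat" where
  "count_instances \<P> V = card {P. P \<subseteq> V \<and> P \<in> \<P>}"

definition ith_point :: "'a::linorder set \<Rightarrow> nat \<Rightarrow> 'a" where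
  "ith_point A i = (THE x. x \<in> A \<and> card {y\<in>A. y < x} = i - 1)"

definition is_reconstruction ::
    "'a::linorder set set \<Rightarrow> nat \<Rightarrow> 'a \<Rightarrow> 'a \<Rightarrow> 'a set \<Rightarrow> bool" where
  "is_reconstruction \<P> j u v P \<longleftrightarrow>
     P \<in> \<P> \<and> ith_point P j = u \<and> ith_point P (Suc j) = v"

definition at_most_one_reconstruction :: "nat \<Rightarrow> 'a::linorder set set \<Rightarrow> bool" where
  "at_most_one_reconstruction k \<P> \<longleftrightarrow>
     (\<forall>j\<in>{1..k-1}. \<forall>u v. u < v \<longrightarrow>
        (\<forall>P Q. is_reconstruction \<P> j u v P \<and> is_reconstruction \<P> j u v Q \<longrightarrow> P = Q))"

definition set_less :: "'a::linorder set \<Rightarrow> 'a set \<Rightarrow> bool" where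
  "set_less A B \<longleftrightarrow> (\<forall>a\<in>A. \<forall>b\<in>B. a < b)"

definition decomposition :: "nat \<Rightarrow> (nat \<Rightarrow> 'a set) \<Rightarrow> 'a set \<Rightarrow> bool" where
  "decomposition l Vs V \<longleftrightarrow>
     (\<forall>i\<in>{1..l}. \<forall>i'\<in>{1..l}. i \<noteq> i' \<longrightarrow> Vs i \<inter> Vs i' = {}) \<and>
     (\<Union>i\<in>{1..l}. Vs i) = V"

definition orderly :: "nat \<Rightarrow> (nat \<Rightarrow> 'a::linorder set) \<Rightarrow> bool" where
  "orderly l Vs \<longleftrightarrow> (\<forall>i\<in>{1..l}. \<forall>i'\<in>{1..l}. i < i' \<longrightarrow> set_less (Vs i) (Vs i'))"

definition balanced :: "nat \<Rightarrow> nat \<Rightarrow> (nat \<Rightarrow> 'a set) \<Rightarrow> bool" where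
  "balanced n l Vs \<longleftrightarrow>
     (\<forall>i\<in>{1..l}. finite (Vs i) \<and>
        (card (Vs i) = n div l \<or> card (Vs i) = (n + l - 1) div l))"

definition of_echelon :: "(nat \<Rightarrow> 'a::linorder set) \<Rightarrow> nat \<Rightarrow> 'a set \<Rightarrow> bool" where
  "of_echelon Vs j P \<longleftrightarrow> ith_point P j \<in> Vs j \<and> ith_point P (Suc j) \<in> Vs j"

end

theory Submission
  imports Defs
begin

(*
  Any instance P contained in V has k points distributed over the k - 1 blocks, which are
  ordered, so two consecutive points of P, say its jth and (j+1)th, lie in a common block V_j.
  Hence P is a reconstruction from a triple (j, v, w) with v < w in V_j, and by the uniqueness
  of reconstructions no triple comes from two instances. So S_P(V) is at most the number of
  pairs v < w within one block, which for a balanced decomposition is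
  (n - r)(n + r - k + 1)/(2k - 2), and equality holds iff every such triple comes from an
  instance that comes from no other triple, i.e. that is of no other echelon.
*)

lemma card_less_nth_sorted_list_of_set:
  fixes A :: "'a::linorder set"
  assumes "finite A" "t < card A"
  shows "card {y\<in>A. y < sorted_list_of_set A ! t} = t"
proof -
  define xs where "xs = sorted_list_of_set A"
  have strict: "sorted_wrt (<) xs" and dist: "distinct xs"
    and len: "length xs = card A" and set_xs: "set xs = A"
    using assms(1) by (simp_all add: xs_def)
  have less_iff: "xs ! i < xs ! t \<longleftrightarrow> i < t" if "i < length xs" for i
    using sorted_wrt_nth_less[OF strict] that assms(2) len
    by (metis linorder_neqE_nat order.asym order.irrefl)
  have "{y\<in>A. y < xs ! t} = (!) xs ` {..<t}"
    using less_iff assms(2) len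
    by (auto simp flip: set_xs simp: in_set_conv_nth) (use order.strict_trans in blast)
  moreover have "inj_on ((!) xs) {..<t}"
    using dist assms(2) len by (auto simp: inj_on_def nth_eq_iff_index_eq)
  ultimately show ?thesis by (simp add: xs_def card_image)
qed

lemma ith_point_Suc_eq_nth:
  fixes A :: "'a::linorder set"
  assumes "finite A" "t < card A"
  shows "ith_point A (Suc t) = sorted_list_of_set A ! t"
  unfolding ith_point_def
proof (rule the_equality)
  show "sorted_list_of_set A ! t \<in> A \<and> card {y\<in>A. y < sorted_list_of_set A ! t} = Suc t - 1"
    using assms card_less_nth_sorted_list_of_set[OF assms]
    by (metis diff_Suc_1 length_sorted_list_of_set nth_mem set_sorted_list_of_set)
next
  fix x assume x: "x \<in> A \<and> card {y\<in>A. y < x} = Suc t - 1"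
  then obtain i where "i < card A" "x = sorted_list_of_set A ! i"
    using assms(1) by (metis in_set_conv_nth length_sorted_list_of_set set_sorted_list_of_set)
  with x show "x = sorted_list_of_set A ! t"
    using card_less_nth_sorted_list_of_set[OF assms(1)] by auto
qed

lemma ith_point_in:
  fixes A :: "'a::linorder set"
  assumes "finite A" "1 \<le> i" "i \<le> card A"
  shows "ith_point A i \<in> A"
  using ith_point_Suc_eq_nth[OF assms(1), of "i - 1"] assms
  by (metis Suc_diff_le Suc_le_eq diff_Suc_1 length_sorted_list_of_set nth_mem set_sorted_list_of_set)

lemma ith_point_less_Suc:
  fixes A :: "'a::linorder set"
  assumes "finite A" "1 \<le> i" "i < card A"
  shows "ith_point A i < ith_point A (Suc i)"
proof -
  have "sorted_list_of_set A ! (i - 1) < sorted_list_of_set A ! i"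
    using assms by (intro sorted_wrt_nth_less[of "(<)"]) simp_all
  then show ?thesis
    using ith_point_Suc_eq_nth[OF assms(1), of "i - 1"] ith_point_Suc_eq_nth[OF assms(1), of i] assms
    by simp
qed

lemma mono_step_hits_diagonal:
  fixes c :: "nat \<Rightarrow> nat"
  assumes "\<And>t. t < l \<Longrightarrow> c t \<le> c (Suc t)" "1 \<le> c 0" "c l \<le> l"
  shows "\<exists>t<l. c t = Suc t \<and> c (Suc t) = Suc t"
  using assms
proof (induction l)
  case 0
  then show ?case by simp
next
  case (Suc l)
  show ?case
  proof (cases "c l \<le> l")
    case True
    then show ?thesis using Suc by (metis less_Suc_eq)
  next
    case False
    then have "c l = Suc l" "c (Suc l) = Suc l"
      using Suc.prems(1)[of l] Suc.prems(3) by auto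
    then show ?thesis by blast
  qed
qed

lemma exists_echelon:
  fixes Vs :: "nat \<Rightarrow> 'a::linorder set"
  assumes "orderly l Vs" "finite P" "P \<subseteq> (\<Union>i\<in>{1..l}. Vs i)" "l < card P"
  shows "\<exists>j\<in>{1..l}. of_echelon Vs j P"
proof -
  obtain b where b: "\<And>x. x \<in> P \<Longrightarrow> b x \<in> {1..l} \<and> x \<in> Vs (b x)"
    using assms(3) by (metis UN_E subsetD)
  have b_mono: "b x \<le> b y" if "x \<in> P" "y \<in> P" "x < y" for x y
  proof (rule ccontr)
    assume "\<not> b x \<le> b y"
    then have "y < x"
      using assms(1) b that unfolding orderly_def set_less_def by (meson not_le)
    with \<open>x < y\<close> show False by simp
  qed
  define c where "c t = b (ith_point P (Suc t))" for t
  have point_in: "ith_point P (Suc t) \<in> P" if "t \<le> l" for t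
    using ith_point_in[OF assms(2)] that assms(4) by simp
  have "\<exists>t<l. c t = Suc t \<and> c (Suc t) = Suc t"
  proof (rule mono_step_hits_diagonal)
    show "c t \<le> c (Suc t)" if "t < l" for t
      unfolding c_def using that assms(4) point_in
      by (intro b_mono ith_point_less_Suc[OF assms(2)]) simp_all
    show "1 \<le> c 0" "c l \<le> l"
      unfolding c_def using b point_in by auto
  qed
  then obtain t where "t < l" "c t = Suc t" "c (Suc t) = Suc t" by blast
  then have "ith_point P (Suc t) \<in> Vs (Suc t)" "ith_point P (Suc (Suc t)) \<in> Vs (Suc t)"
    using b[OF point_in[of t]] b[OF point_in[of "Suc t"]] unfolding c_def by simp_all
  with \<open>t < l\<close> show ?thesis
    unfolding of_echelon_def by (intro bexI[of _ "Suc t"]) simp_all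
qed

lemma card_less_pairs:
  fixes A :: "'a::linorder set"
  assumes "finite A"
  shows "2 * card {(v, w). v \<in> A \<and> w \<in> A \<and> v < w} = card A * (card A - 1)"
proof -
  let ?P = "{(v, w). v \<in> A \<and> w \<in> A \<and> v < w}"
  have fin: "finite ?P"
    using assms by (auto intro: finite_subset[of _ "A \<times> A"])
  have split: "A \<times> A = (?P \<union> prod.swap ` ?P) \<union> (\<lambda>x. (x, x)) ` A"
    by (auto simp: image_iff)
  have "card (A \<times> A) = (card ?P + card (prod.swap ` ?P)) + card ((\<lambda>x. (x, x)) ` A)"
    unfolding split using fin assms
    by (subst card_Un_disjoint; auto intro!: card_Un_disjoint)
  also have "\<dots> = 2 * card ?P + card A"
    by (simp add: card_image inj_on_def)
  finally show ?thesis
    by (simp add: card_cartesian_product diff_mult_distrib2)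
qed

definition block_pairs :: "nat \<Rightarrow> (nat \<Rightarrow> 'a::linorder set) \<Rightarrow> (nat \<times> 'a \<times> 'a) set" where
  "block_pairs l Vs = (SIGMA j:{1..l}. {(v, w). v \<in> Vs j \<and> w \<in> Vs j \<and> v < w})"

lemma mem_block_pairs_iff:
  "(j, v, w) \<in> block_pairs l Vs \<longleftrightarrow> j \<in> {1..l} \<and> v \<in> Vs j \<and> w \<in> Vs j \<and> v < w"
  by (simp add: block_pairs_def)

lemma finite_block_pairs:
  assumes "\<And>j. j \<in> {1..l} \<Longrightarrow> finite (Vs j)"
  shows "finite (block_pairs l Vs)"
  unfolding block_pairs_def using assms
  by (intro finite_SigmaI) (auto intro: finite_subset[of _ "Vs _ \<times> Vs _"])

lemma card_block_pairs:
  assumes "\<And>j. j \<in> {1..l} \<Longrightarrow> finite (Vs j)"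
  shows "2 * card (block_pairs l Vs) = (\<Sum>j\<in>{1..l}. card (Vs j) * (card (Vs j) - 1))"
proof -
  have "card (block_pairs l Vs) = (\<Sum>j\<in>{1..l}. card {(v, w). v \<in> Vs j \<and> w \<in> Vs j \<and> v < w})"
    unfolding block_pairs_def using assms
    by (intro card_SigmaI) (auto intro: finite_subset[of _ "Vs _ \<times> Vs _"])
  then show ?thesis
    using assms by (simp add: sum_distrib_left card_less_pairs)
qed

lemma finite_decomposition_block:
  assumes "decomposition l Vs V" "finite V" "j \<in> {1..l}"
  shows "finite (Vs j)"
  using assms unfolding decomposition_def by (metis UN_upper finite_subset)

lemma sum_card_decomposition:
  assumes "decomposition l Vs V" "finite V"
  shows "(\<Sum>j\<in>{1..l}. card (Vs j)) = card V"
  using assms card_UN_disjoint[of "{1..l}" Vs] finite_decomposition_block[OF assms]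
  unfolding decomposition_def by simp

lemma ceiling_div_cases:
  fixes n l :: nat
  assumes "0 < l"
  shows "(n + l - 1) div l = n div l \<or> (n + l - 1) div l = Suc (n div l)"
proof -
  have "n div l \<le> (n + l - 1) div l"
    using assms by (intro div_le_mono) simp
  moreover have "n + l - 1 < Suc (Suc (n div l)) * l"
    using mod_less_divisor[OF assms, of n] div_mult_mod_eq[of n l]
    by (simp only: mult_Suc)
  then have "(n + l - 1) div l < Suc (Suc (n div l))"
    by (simp add: less_mult_imp_div_less)
  ultimately show ?thesis by linarith
qed

lemma sum_pairs_balanced:
  fixes c :: "'b \<Rightarrow> nat"
  assumes "finite J" "card J = l" "(\<Sum>j\<in>J. c j) = n"
    and balanced: "\<And>j. j \<in> J \<Longrightarrow> c j = n div l \<or> c j = Suc (n div l)"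
  shows "(\<Sum>j\<in>J. c j * (c j - 1)) + l * (n div l) = (n div l) * (n + n mod l)"
proof -
  let ?q = "n div l"
  have "(\<Sum>j\<in>J. 2 * c j - ?q) = 2 * n - l * ?q"
  proof (subst sum_subtractf_nat)
    show "?q \<le> 2 * c j" if "j \<in> J" for j using balanced[OF that] by linarith
    show "(\<Sum>j\<in>J. 2 * c j) - (\<Sum>j\<in>J. ?q) = 2 * n - l * ?q"
      using assms(2,3) by (simp flip: sum_distrib_left)
  qed
  also have "\<dots> = n + n mod l"
    using div_mult_mod_eq[of n l] by (simp only: mult.commute[of l])
  finally have sum_diff: "(\<Sum>j\<in>J. 2 * c j - ?q) = n + n mod l" .
  have "(\<Sum>j\<in>J. c j * (c j - 1)) + l * ?q = (\<Sum>j\<in>J. c j * (c j - 1) + ?q)"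
    using assms(2) by (simp add: sum.distrib)
  also have "\<dots> = (\<Sum>j\<in>J. ?q * (2 * c j - ?q))"
  proof (rule sum.cong[OF refl])
    fix j assume "j \<in> J"
    then consider "c j = ?q" | "c j = Suc ?q" using balanced by blast
    then show "c j * (c j - 1) + ?q = ?q * (2 * c j - ?q)"
      by cases (simp_all add: algebra_simps)
  qed
  also have "\<dots> = ?q * (n + n mod l)"
    by (simp add: sum_distrib_left[symmetric] sum_diff)
  finally show ?thesis .
qed

lemma card_block_pairs_balanced:
  fixes Vs :: "nat \<Rightarrow> 'a::linorder set"
  assumes "0 < l" "decomposition l Vs V" "finite V" "card V = n" "balanced n l Vs"
  shows "real (card (block_pairs l Vs)) =
    (real n - real (n mod l)) * (real n + real (n mod l) - real l) / (2 * real l)"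
proof -
  let ?q = "n div l" and ?r = "n mod l"
  have fin: "\<And>j. j \<in> {1..l} \<Longrightarrow> finite (Vs j)"
    using finite_decomposition_block[OF assms(2,3)] .
  have "\<And>j. j \<in> {1..l} \<Longrightarrow> card (Vs j) = ?q \<or> card (Vs j) = Suc ?q"
    using assms(5) ceiling_div_cases[OF assms(1), of n] unfolding balanced_def by auto
  then have "(\<Sum>j\<in>{1..l}. card (Vs j) * (card (Vs j) - 1)) + l * ?q = ?q * (n + ?r)"
    using sum_card_decomposition[OF assms(2,3)] assms(4) by (intro sum_pairs_balanced) simp_all
  then have "2 * card (block_pairs l Vs) + l * ?q = ?q * (n + ?r)"
    using card_block_pairs[of l Vs, OF fin] by linarith
  then have "real (2 * card (block_pairs l Vs) + l * ?q) = real (?q * (n + ?r))"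
    by (rule arg_cong)
  then have card_eq: "real (card (block_pairs l Vs)) = real ?q * (real n + real ?r - real l) / 2"
    by (simp add: algebra_simps)
  have "real n = real (l * ?q + ?r)"
    by simp
  then have "real n = real l * real ?q + real ?r"
    by (simp only: of_nat_add of_nat_mult)
  then have n_minus_r: "real n - real ?r = real l * real ?q"
    by simp
  show ?thesis
    unfolding card_eq n_minus_r using assms(1) by simp
qed

lemma card_eq_iff_private_witnesses:
  fixes R :: "'x \<Rightarrow> 'd \<Rightarrow> bool"
  assumes "finite D"
    and covered: "\<And>x. x \<in> X \<Longrightarrow> \<exists>d\<in>D. R x d"
    and unique: "\<And>d x y. d \<in> D \<Longrightarrow> x \<in> X \<Longrightarrow> y \<in> X \<Longrightarrow> R x d \<Longrightarrow> R y d \<Longrightarrow> x = y"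
  shows "card X = card D \<longleftrightarrow> (\<forall>d\<in>D. \<exists>x\<in>X. R x d \<and> (\<forall>d'\<in>D. R x d' \<longrightarrow> d' = d))"
proof -
  obtain f where f: "\<And>x. x \<in> X \<Longrightarrow> f x \<in> D \<and> R x (f x)"
    using covered by metis
  have inj: "inj_on f X"
    using f unique by (intro inj_onI) metis
  have image: "f ` X \<subseteq> D"
    using f by blast
  show ?thesis
  proof
    assume "card X = card D"
    then have onto: "f ` X = D"
      using card_image[OF inj] by (intro card_subset_eq[OF assms(1) image]) simp
    show "\<forall>d\<in>D. \<exists>x\<in>X. R x d \<and> (\<forall>d'\<in>D. R x d' \<longrightarrow> d' = d)"
    proof
      fix d assume "d \<in> D"
      then obtain x where x: "x \<in> X" "d = f x"
        using onto by blast
      have "d' = d" if "d' \<in> D" "R x d'" for d'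
      proof -
        obtain y where "y \<in> X" "d' = f y"
          using onto \<open>d' \<in> D\<close> by blast
        with that x f have "x = y" by (metis unique)
        with \<open>d' = f y\<close> x show ?thesis by simp
      qed
      with x f show "\<exists>x\<in>X. R x d \<and> (\<forall>d'\<in>D. R x d' \<longrightarrow> d' = d)" by blast
    qed
  next
    assume "\<forall>d\<in>D. \<exists>x\<in>X. R x d \<and> (\<forall>d'\<in>D. R x d' \<longrightarrow> d' = d)"
    then obtain g where g: "\<And>d. d \<in> D \<Longrightarrow> g d \<in> X \<and> R (g d) d \<and> (\<forall>d'\<in>D. R (g d) d' \<longrightarrow> d' = d)"
      by metis
    have "inj_on g D"
      using g by (intro inj_onI) metis
    moreover have "finite X"
      using inj image assms(1) by (metis finite_imageD finite_subset)
    ultimately have "card D \<le> card X"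
      using g by (intro card_inj_on_le) auto
    moreover have "card X \<le> card D"
      using card_inj_on_le[OF inj image assms(1)] .
    ultimately show "card X = card D" by simp
  qed
qed

lemma block_pair_reconstruction_iff:
  assumes "k_pattern (Suc l) \<P>" "P \<in> \<P>"
  shows "(i, v, w) \<in> block_pairs l Vs \<and> is_reconstruction \<P> i v w P \<longleftrightarrow>
    i \<in> {1..l} \<and> of_echelon Vs i P \<and> v = ith_point P i \<and> w = ith_point P (Suc i)"
proof -
  have "i \<in> {1..l} \<Longrightarrow> ith_point P i < ith_point P (Suc i)"
    using assms unfolding k_pattern_def by (intro ith_point_less_Suc) auto
  then show ?thesis
    using assms(2)
    unfolding mem_block_pairs_iff is_reconstruction_def of_echelon_def by auto
qed

lemma exists_block_pair_reconstruction:
  fixes Vs :: "nat \<Rightarrow> 'a::linorder set"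
  assumes "k_pattern (Suc l) \<P>" "orderly l Vs" "P \<in> \<P>" "P \<subseteq> (\<Union>i\<in>{1..l}. Vs i)"
  shows "\<exists>(j, v, w)\<in>block_pairs l Vs. is_reconstruction \<P> j v w P"
proof -
  have "finite P" "card P = Suc l"
    using assms(1,3) by (auto simp: k_pattern_def)
  then obtain j where "j \<in> {1..l}" "of_echelon Vs j P"
    using exists_echelon[OF assms(2) _ assms(4)] by auto
  then show ?thesis
    using block_pair_reconstruction_iff[OF assms(1,3), of j] by blast
qed

lemma unique_block_pair_iff_no_other_echelon:
  assumes "k_pattern (Suc l) \<P>" "(j, v, w) \<in> block_pairs l Vs" "is_reconstruction \<P> j v w P"
  shows "(\<forall>d\<in>block_pairs l Vs. (case d of (i, v', w') \<Rightarrow> is_reconstruction \<P> i v' w' P) \<longrightarrow>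
      d = (j, v, w)) \<longleftrightarrow> (\<forall>i\<in>{1..l}. i \<noteq> j \<longrightarrow> \<not> of_echelon Vs i P)"
proof -
  have "P \<in> \<P>"
    using assms(3) by (simp add: is_reconstruction_def)
  note witness = block_pair_reconstruction_iff[OF assms(1) this]
  have j: "v = ith_point P j" "w = ith_point P (Suc j)"
    using witness[of j v w] assms(2,3) by simp_all
  show ?thesis
  proof
    assume only: "\<forall>d\<in>block_pairs l Vs. (case d of (i, v', w') \<Rightarrow> is_reconstruction \<P> i v' w' P) \<longrightarrow>
      d = (j, v, w)"
    show "\<forall>i\<in>{1..l}. i \<noteq> j \<longrightarrow> \<not> of_echelon Vs i P"
      using only witness by fastforce
  next
    assume "\<forall>i\<in>{1..l}. i \<noteq> j \<longrightarrow> \<not> of_echelon Vs i P"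
    then show "\<forall>d\<in>block_pairs l Vs. (case d of (i, v', w') \<Rightarrow> is_reconstruction \<P> i v' w' P) \<longrightarrow>
      d = (j, v, w)"
      using witness j by fastforce
  qed
qed

lemma count_instances_eq_card_block_pairs_iff:
  fixes \<P> :: "'a::linorder set set"
  assumes "k_pattern (Suc l) \<P>" "at_most_one_reconstruction (Suc l) \<P>"
    and "finite V" "decomposition l Vs V" "orderly l Vs"
  shows "count_instances \<P> V = card (block_pairs l Vs) \<longleftrightarrow>
    (\<forall>j\<in>{1..l}. \<forall>v\<in>Vs j. \<forall>w\<in>Vs j. v < w \<longrightarrow>
       (\<exists>P. is_reconstruction \<P> j v w P \<and> P \<subseteq> V \<and>
            (\<forall>i\<in>{1..l}. i \<noteq> j \<longrightarrow> \<not> of_echelon Vs i P)))"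
proof -
  let ?X = "{P. P \<subseteq> V \<and> P \<in> \<P>}" and ?D = "block_pairs l Vs"
  define R where "R P = (\<lambda>(j, v, w). is_reconstruction \<P> j v w P)" for P
  have "card ?X = card ?D \<longleftrightarrow> (\<forall>d\<in>?D. \<exists>P\<in>?X. R P d \<and> (\<forall>d'\<in>?D. R P d' \<longrightarrow> d' = d))"
  proof (rule card_eq_iff_private_witnesses)
    show "finite ?D"
      using finite_decomposition_block[OF assms(4,3)] by (rule finite_block_pairs)
  next
    fix P assume "P \<in> ?X"
    then show "\<exists>d\<in>?D. R P d"
      using exists_block_pair_reconstruction[OF assms(1,5), of P] assms(4)
      by (auto simp: R_def decomposition_def)
  next
    fix d P Q assume "d \<in> ?D" "R P d" "R Q d"
    moreover obtain j v w where "d = (j, v, w)"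
      by (cases d)
    ultimately have "j \<in> {1..Suc l - 1}" "v < w"
      "is_reconstruction \<P> j v w P" "is_reconstruction \<P> j v w Q"
      by (simp_all add: mem_block_pairs_iff R_def)
    then show "P = Q"
      using assms(2) unfolding at_most_one_reconstruction_def by blast
  qed
  also have "\<dots> \<longleftrightarrow> (\<forall>j\<in>{1..l}. \<forall>v\<in>Vs j. \<forall>w\<in>Vs j. v < w \<longrightarrow>
       (\<exists>P. is_reconstruction \<P> j v w P \<and> P \<subseteq> V \<and>
            (\<forall>i\<in>{1..l}. i \<noteq> j \<longrightarrow> \<not> of_echelon Vs i P)))"
  proof -
    have "(\<exists>P\<in>?X. R P (j, v, w) \<and> (\<forall>d'\<in>?D. R P d' \<longrightarrow> d' = (j, v, w))) \<longleftrightarrow>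
        (\<exists>P. is_reconstruction \<P> j v w P \<and> P \<subseteq> V \<and>
            (\<forall>i\<in>{1..l}. i \<noteq> j \<longrightarrow> \<not> of_echelon Vs i P))"
      if "j \<in> {1..l}" "v \<in> Vs j" "w \<in> Vs j" "v < w" for j v w
    proof -
      have "(j, v, w) \<in> ?D"
        using that by (simp add: mem_block_pairs_iff)
      moreover have "is_reconstruction \<P> j v w P \<Longrightarrow> P \<in> \<P>" for P
        by (simp add: is_reconstruction_def)
      ultimately show ?thesis
        using unique_block_pair_iff_no_other_echelon[OF assms(1)] unfolding R_def by blast
    qed
    then show ?thesis
      by (auto simp: Ball_def mem_block_pairs_iff)
  qed
  finally show ?thesis
    unfolding count_instances_def .
qed

theorem mainTheorem4:
  fixes \<P> :: "'a::linorder set set" and k n :: nat and V :: "'a set" and Vs :: "nat \<Rightarrow> 'a set"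
  assumes "k > 1"
    and "k_pattern k \<P>"
    and "at_most_one_reconstruction k \<P>"
    and "n > 0"
    and "finite V" and "card V = n"
    and "decomposition (k - 1) Vs V"
    and "orderly (k - 1) Vs"
    and "balanced n (k - 1) Vs"
  shows "real (count_instances \<P> V) =
           (real n - real (n mod (k - 1))) * (real n + real (n mod (k - 1)) - real k + 1)
             / (2 * real k - 2)
    \<longleftrightarrow> (\<forall>j\<in>{1..k-1}. \<forall>v\<in>Vs j. \<forall>w\<in>Vs j. v < w \<longrightarrow>
           (\<exists>P. is_reconstruction \<P> j v w P \<and> P \<subseteq> V \<and>
                (\<forall>i\<in>{1..k-1}. i \<noteq> j \<longrightarrow> \<not> of_echelon Vs i P)))"
proof -
  define l where "l = k - 1"
  have k: "k = Suc l" and "0 < l"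
    using assms(1) by (simp_all add: l_def)
  have "(real n - real (n mod l)) * (real n + real (n mod l) - real k + 1) / (2 * real k - 2)
      = real (card (block_pairs l Vs))"
    using card_block_pairs_balanced[OF \<open>0 < l\<close> assms(7,5,6,9)[folded l_def]]
    by (simp add: k algebra_simps)
  then have "real (count_instances \<P> V) =
      (real n - real (n mod l)) * (real n + real (n mod l) - real k + 1) / (2 * real k - 2)
      \<longleftrightarrow> count_instances \<P> V = card (block_pairs l Vs)"
    by simp
  also have "\<dots> \<longleftrightarrow> (\<forall>j\<in>{1..l}. \<forall>v\<in>Vs j. \<forall>w\<in>Vs j. v < w \<longrightarrow>
           (\<exists>P. is_reconstruction \<P> j v w P \<and> P \<subseteq> V \<and>
                (\<forall>i\<in>{1..l}. i \<noteq> j \<longrightarrow> \<not> of_echelon Vs i P)))"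
    using assms(2,3,5,7,8) unfolding k
    by (intro count_instances_eq_card_block_pairs_iff) simp_all
  finally show ?thesis
    unfolding l_def .
qed

end
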